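(* Consider an instance of $P|G=\textit{block graph}|C_{\max}$ with $m$ identical machines, jobs $J=\{J_1,\dots,J_n\}$ with processing times $p_j\in\mathbb{N}$, and block conflict graph $G$ with $\omega(G)\le m$ and with $k$ blocks $B_1,\dots,B_k$ listed in the greedy order described in the context. Run the greedy algorithm described in the context. For $j\in\{0,\dots,k\}$ and each machine $M_i$, let $C_j(M_i)$ be the load of $M_i$ after the first $j$ blocks have been processed, let $C_j=\frac1m\sum_{i=1}^m C_j(M_i)$, and let $p_{\max}=\max_l p_l$. Then for every $i\in\{1,\dots,m\}$ and every $j\in\{0,\dots,k\}$, $$C_j(M_i)\le C_j+\max\{C_j,p_{\max}\}.$$
   Context: Scheduling with a conflict graph: jobs $J=\{J_1,\dots,J_n\}$, machines $M=\{M_1,\dots,M_m\}$, and a conflict graph $G=(J,E)$; a schedule is a map $\sigma:J\to M$ such that adjacent jobs are assigned to different machines. On identical machines ($P$) job $J_j$ has processing time $p_j$ on every machine; the load of a machine is the sum of processing times of jobs assigned to it; the makespan $C_{\max}(\sigma)$ is the maximum load, and $C^{OPT}_{\max}$ is the minimum makespan over all schedules. A block graph is a graph in which every maximal 2-connected component is a clique; a block is a maximal clique; a cut-vertex is a vertex in at least two blocks. The block-cut forest $T_G$ has a node for each block and each cut-vertex, with a block node adjacent to a cut-vertex node iff the cut-vertex lies in the block; each component is rooted arbitrarily. Greedy algorithm: list the blocks in the order of a pre-order traversal of (each component of) the rooted block-cut forest. Process the blocks in this order. For the current block $B$, let $L_J$ be the jobs of $B$ sorted by non-increasing processing time and let $L_M$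 be the $|B|$ machines of smallest current load, sorted by non-decreasing current load (ties broken arbitrarily). If $B$ has a parent cut-vertex $u$ in $T_G$ that has already been assigned to some machine $M'$, then: if $M'\in L_M$ remove $M'$ from $L_M$, otherwise remove the last machine of $L_M$; and remove $u$ from $L_J$. Then assign the $i$-th job of $L_J$ to the $i$-th machine of $L_M$ for $i=1,\dots,|L_M|$, updating loads. *)

theory Defs
  imports Complex_Main
begin

definition simple_graph :: "'j set \<Rightarrow> ('j \<Rightarrow> 'j \<Rightarrow> bool) \<Rightarrow> bool" where
  "simple_graph J E \<longleftrightarrow> finite J \<and> (\<forall>a b. E a b \<longrightarrow> a \<in> J \<and> b \<in> J \<and> a \<noteq> b \<and> E b a)"

definition clique :: "('j \<Rightarrow> 'j \<Rightarrow> bool) \<Rightarrow> 'j set \<Rightarrow> bool" where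
  "clique E K \<longleftrightarrow> (\<forall>a\<in>K. \<forall>b\<in>K. a \<noteq> b \<longrightarrow> E a b)"

text \<open>The induced subgraph on S is connected (the empty graph counts as connected).\<close>
definition connected_on :: "('j \<Rightarrow> 'j \<Rightarrow> bool) \<Rightarrow> 'j set \<Rightarrow> bool" where
  "connected_on E S \<longleftrightarrow>
     (\<forall>x\<in>S. \<forall>y\<in>S. (\<lambda>a b. a \<in> S \<and> b \<in> S \<and> E a b)\<^sup>*\<^sup>* x y)"

definition nonseparable :: "('j \<Rightarrow> 'j \<Rightarrow> bool) \<Rightarrow> 'j set \<Rightarrow> bool" where
  "nonseparable E S \<longleftrightarrow> S \<noteq> {} \<and> connected_on E S \<and> (\<forall>v\<in>S. connected_on E (S - {v}))"

text \<open>A block: a maximal nonseparable (2-connected, or K1/K2) vertex set.\<close>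
definition is_block :: "'j set \<Rightarrow> ('j \<Rightarrow> 'j \<Rightarrow> bool) \<Rightarrow> 'j set \<Rightarrow> bool" where
  "is_block J E B \<longleftrightarrow> B \<subseteq> J \<and> nonseparable E B \<and>
     (\<forall>T. B \<subset> T \<and> T \<subseteq> J \<longrightarrow> \<not> nonseparable E T)"

definition block_graph :: "'j set \<Rightarrow> ('j \<Rightarrow> 'j \<Rightarrow> bool) \<Rightarrow> bool" where
  "block_graph J E \<longleftrightarrow> (\<forall>B. is_block J E B \<longrightarrow> clique E B)"

definition cut_vertex :: "'j set \<Rightarrow> ('j \<Rightarrow> 'j \<Rightarrow> bool) \<Rightarrow> 'j \<Rightarrow> bool" where
  "cut_vertex J E v \<longleftrightarrow> (\<exists>B1 B2. is_block J E B1 \<and> is_block J E B2 \<and> B1 \<noteq> B2 \<and> v \<in> B1 \<and> v \<in> B2)"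

definition bc_nodes :: "'j set \<Rightarrow> ('j \<Rightarrow> 'j \<Rightarrow> bool) \<Rightarrow> ('j set + 'j) set" where
  "bc_nodes J E = Inl ` {B. is_block J E B} \<union> Inr ` {v. cut_vertex J E v}"

definition bc_adj :: "'j set \<Rightarrow> ('j \<Rightarrow> 'j \<Rightarrow> bool) \<Rightarrow> ('j set + 'j) \<Rightarrow> ('j set + 'j) \<Rightarrow> bool" where
  "bc_adj J E x y \<longleftrightarrow> (\<exists>B v. (x = Inl B \<and> y = Inr v \<or> x = Inr v \<and> y = Inl B) \<and>
       is_block J E B \<and> cut_vertex J E v \<and> v \<in> B)"

definition parent_rel :: "('n \<Rightarrow> 'n option) \<Rightarrow> 'n \<Rightarrow> 'n \<Rightarrow> bool" where
  "parent_rel par x y \<longleftrightarrow> par x = Some y"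

text \<open>A rooting of the block-cut forest (each component rooted at some node), given by the
  parent map: every forest edge is oriented towards the parent, only forest edges are used,
  and there are no cycles.\<close>
definition is_rooting :: "'j set \<Rightarrow> ('j \<Rightarrow> 'j \<Rightarrow> bool) \<Rightarrow> (('j set + 'j) \<Rightarrow> ('j set + 'j) option) \<Rightarrow> bool" where
  "is_rooting J E par \<longleftrightarrow>
     (\<forall>x y. par x = Some y \<longrightarrow> x \<in> bc_nodes J E \<and> bc_adj J E x y) \<and>
     (\<forall>x y. bc_adj J E x y \<longrightarrow> par x = Some y \<or> par y = Some x) \<and>
     (\<forall>x. \<not> (parent_rel par)\<^sup>+\<^sup>+ x x)"

text \<open>A pre-order traversal of the rooted forest: a listing of all nodes in which the
  subtree of every node (the node and its descendants) occupies a contiguous segment starting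
  at that node.\<close>
definition is_preorder :: "'j set \<Rightarrow> ('j \<Rightarrow> 'j \<Rightarrow> bool) \<Rightarrow> (('j set + 'j) \<Rightarrow> ('j set + 'j) option)
     \<Rightarrow> ('j set + 'j) list \<Rightarrow> bool" where
  "is_preorder J E par ns \<longleftrightarrow> distinct ns \<and> set ns = bc_nodes J E \<and>
     (\<forall>i < length ns. \<exists>c. {l. l < length ns \<and> (parent_rel par)\<^sup>*\<^sup>* (ns ! l) (ns ! i)} = {i..<i + c})"

definition block_order :: "('j set + 'j) list \<Rightarrow> 'j set list" where
  "block_order ns = map projl (filter isl ns)"

definition parent_cut :: "(('j set + 'j) \<Rightarrow> ('j set + 'j) option) \<Rightarrow> 'j set \<Rightarrow> 'j option" where
  "parent_cut par B = (case par (Inl B) of Some (Inr u) \<Rightarrow> Some u | _ \<Rightarrow> None)"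

text \<open>Machines are 0..m-1. A (partial) schedule maps jobs to machines.\<close>
definition load :: "'j set \<Rightarrow> ('j \<Rightarrow> nat) \<Rightarrow> ('j \<rightharpoonup> nat) \<Rightarrow> nat \<Rightarrow> nat" where
  "load J p \<sigma> i = (\<Sum>j\<in>{j\<in>J. \<sigma> j = Some i}. p j)"

text \<open>One step of the greedy algorithm on block B with (possible) parent cut-vertex pc;
  all tie-breaking is arbitrary (existentially chosen lists).\<close>
definition greedy_step :: "'j set \<Rightarrow> ('j \<Rightarrow> nat) \<Rightarrow> nat \<Rightarrow> 'j option \<Rightarrow> 'j set
     \<Rightarrow> ('j \<rightharpoonup> nat) \<Rightarrow> ('j \<rightharpoonup> nat) \<Rightarrow> bool" where
  "greedy_step J p m pc B \<sigma> \<sigma>' \<longleftrightarrow>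
    (\<exists>LJ LM. distinct LJ \<and> set LJ = B \<and> sorted_wrt (\<lambda>a b. p b \<le> p a) LJ \<and>
      distinct LM \<and> set LM \<subseteq> {..<m} \<and> length LM = card B \<and>
      sorted_wrt (\<lambda>a b. load J p \<sigma> a \<le> load J p \<sigma> b) LM \<and>
      (\<forall>a\<in>set LM. \<forall>b\<in>{..<m} - set LM. load J p \<sigma> a \<le> load J p \<sigma> b) \<and>
      (case pc of
         Some u \<Rightarrow> (case \<sigma> u of
             Some M' \<Rightarrow> \<sigma>' = \<sigma>(remove1 u LJ [\<mapsto>]
                               (if M' \<in> set LM then remove1 M' LM else butlast LM))
           | None \<Rightarrow> \<sigma>' = \<sigma>(LJ [\<mapsto>] LM))
       | None \<Rightarrow> \<sigma>' = \<sigma>(LJ [\<mapsto>] LM)))"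

end

theory Submission
  imports Defs
begin

(*
  Let P = p_max and write l for the machine loads. The greedy algorithm maintains, for every
  machine x,
      sum over t ~= x of (l x - P - l t)^+  <=  (l x - P)^+.
  In a step, jobs of size at most P go, largest first, to the least loaded machines, so the
  excess of x over any other machine t cannot grow: if t was lighter than x it received a job
  at least as large. The one exception is the machine skipped because it already holds the
  parent cut-vertex; whatever x loses against it is absorbed by the growth of (l x - P)^+.
  If l x > P, dropping the positive parts turns the invariant into
  (m - 1) l x <= S + (m - 2) P for the total load S, which is the claimed bound.
*)

lemma map_upds_nth:
  "distinct xs \<Longrightarrow> length xs = length ys \<Longrightarrow> k < length xs \<Longrightarrow> (f(xs [\<mapsto>] ys)) (xs ! k) = Some (ys ! k)"
proof (induction xs arbitrary: ys k f)
  case (Cons a as)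
  then obtain b bs where ys: "ys = b # bs" by (cases ys) auto
  show ?case
  proof (cases k)
    case (Suc k')
    then have "as ! k' \<noteq> a" using Cons.prems by (auto simp: ys)
    then show ?thesis using Cons ys Suc by simp
  qed (use Cons.prems in \<open>simp add: ys\<close>)
qed simp

lemma sorted_wrt_remove1: "sorted_wrt R xs \<Longrightarrow> sorted_wrt R (remove1 x xs)"
  by (induction xs) (auto dest: set_remove1_subset[THEN subsetD])

lemma sorted_wrt_butlast: "sorted_wrt R xs \<Longrightarrow> sorted_wrt R (butlast xs)"
  by (simp add: butlast_conv_take)

lemma last_notin_butlast_imp_eq:
  "x \<in> set xs \<Longrightarrow> x \<notin> set (butlast xs) \<Longrightarrow> x = last xs"
  by (induction xs) (auto split: if_splits)

definition excess_bounded :: "nat \<Rightarrow> real \<Rightarrow> (nat \<Rightarrow> real) \<Rightarrow> bool" where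
  "excess_bounded m P l \<longleftrightarrow>
     (\<forall>x<m. (\<Sum>t\<in>{..<m} - {x}. max 0 (l x - P - l t)) \<le> max 0 (l x - P))"

lemma excess_bounded_imp_le_avg_plus_max:
  assumes bound: "excess_bounded m P l" and nonneg: "\<And>t. 0 \<le> l t" and "0 \<le> P" and x: "x < m"
  shows "l x \<le> (\<Sum>i<m. l i) / real m + max ((\<Sum>i<m. l i) / real m) P"
proof -
  define S where "S = (\<Sum>i<m. l i)"
  define C where "C = S / real m"
  have "0 \<le> S" unfolding S_def using nonneg by (simp add: sum_nonneg)
  then have "0 \<le> C" unfolding C_def by simp
  have "l x \<le> C + max C P"
  proof (cases "l x \<le> P")
    case True
    then show ?thesis using \<open>0 \<le> C\<close> by linarith
  next
    case False
    let ?T = "{..<m} - {x}"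
    have "(\<Sum>t\<in>?T. l x - P - l t) \<le> (\<Sum>t\<in>?T. max 0 (l x - P - l t))"
      by (rule sum_mono) simp
    also have "\<dots> \<le> l x - P" using bound x False unfolding excess_bounded_def by auto
    finally have "(\<Sum>t\<in>?T. l x - P - l t) \<le> l x - P" .
    moreover have "(\<Sum>t\<in>?T. l x - P - l t) = (real m - 1) * (l x - P) - (S - l x)"
      using x by (simp add: sum_subtractf sum_diff1 S_def of_nat_diff)
    ultimately have main: "(real m - 1) * l x \<le> S + (real m - 2) * P"
      by (simp add: algebra_simps)
    show ?thesis
    proof (cases "m = 1")
      case True
      then have "l x = C" using x unfolding C_def S_def by simp
      then show ?thesis using \<open>0 \<le> C\<close> by linarith
    next
      case False
      then have m2: "2 \<le> real m" using x by simp
      have S: "S = real m * C" unfolding C_def using x by simp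
      have "(real m - 2) * P \<le> (real m - 2) * max C P"
        using m2 by (intro mult_left_mono) auto
      then have "(real m - 1) * l x \<le> (real m - 1) * (C + max C P)"
        using main unfolding S by (simp add: algebra_simps)
      then show ?thesis using m2 by simp
    qed
  qed
  then show ?thesis unfolding C_def S_def .
qed

lemma excess_bounded_add:
  assumes bound: "excess_bounded m P l" and nonneg: "\<And>t. 0 \<le> l t"
    and q_range: "\<And>i. 0 \<le> q i \<and> q i \<le> P"
    and q_zero: "\<And>i. i \<notin> Y \<Longrightarrow> q i = 0"
    and q_antitone: "\<And>x t. x \<in> Y \<Longrightarrow> t \<in> Y \<Longrightarrow> l t < l x \<Longrightarrow> q x \<le> q t"
    and others_heavier: "\<And>t x. t < m \<Longrightarrow> t \<notin> Y \<Longrightarrow> t \<noteq> e \<Longrightarrow> x \<in> Y \<Longrightarrow> l x \<le> l t"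
  shows "excess_bounded m P (\<lambda>i. l i + q i)"
  unfolding excess_bounded_def
proof (intro allI impI)
  fix x assume "x < m"
  define l' where "l' i = l i + q i" for i
  define T where "T = {..<m} - {x}"
  let ?f = "\<lambda>t. max 0 (l x - P - l t)" and ?f' = "\<lambda>t. max 0 (l' x - P - l' t)"
  have old: "(\<Sum>t\<in>T. ?f t) \<le> max 0 (l x - P)"
    using bound \<open>x < m\<close> unfolding excess_bounded_def T_def by blast
  have pair: "?f' t \<le> ?f t" if "t < m" "x \<in> Y \<Longrightarrow> t \<noteq> e" for t
  proof (cases "x \<in> Y \<and> l t < l x")
    case True
    then have "t \<in> Y" using others_heavier that by force
    then have "q x \<le> q t" using q_antitone True by blast
    then show ?thesis unfolding l'_def by simp
  next
    case False
    then show ?thesis using q_range[of x] q_range[of t] q_zero[of x] unfolding l'_def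
      by (cases "x \<in> Y") auto
  qed
  have "(\<Sum>t\<in>T. ?f' t) \<le> max 0 (l' x - P)"
  proof (cases "x \<in> Y \<and> e \<in> T")
    case True
    define A where "A = (\<Sum>t\<in>T - {e}. ?f t)"
    have "0 \<le> A" unfolding A_def by (simp add: sum_nonneg)
    have "(\<Sum>t\<in>T. ?f t) = ?f e + A"
      using True unfolding A_def T_def by (intro sum.remove) auto
    then have "?f e + A \<le> max 0 (l x - P)" using old by simp
    then have "max 0 (l' x - P - l e) + A \<le> max 0 (l' x - P)"
      using \<open>0 \<le> A\<close> nonneg[of e] q_range[of x] unfolding l'_def by (auto simp: max_def split: if_splits)
    moreover have "?f' e \<le> max 0 (l' x - P - l e)"
      using q_range[of e] unfolding l'_def by (simp add: max_def)
    moreover have "(\<Sum>t\<in>T - {e}. ?f' t) \<le> A"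
      unfolding A_def T_def using pair by (intro sum_mono) auto
    moreover have "(\<Sum>t\<in>T. ?f' t) = ?f' e + (\<Sum>t\<in>T - {e}. ?f' t)"
      using True unfolding T_def by (intro sum.remove) auto
    ultimately show ?thesis by linarith
  next
    case False
    have "(\<Sum>t\<in>T. ?f' t) \<le> (\<Sum>t\<in>T. ?f t)"
      unfolding T_def using pair False by (intro sum_mono) (auto simp: T_def)
    also have "\<dots> \<le> max 0 (l x - P)" by (rule old)
    also have "\<dots> \<le> max 0 (l' x - P)" using q_range[of x] unfolding l'_def by (simp add: max_def)
    finally show ?thesis .
  qed
  then show "(\<Sum>t\<in>{..<m} - {x}. max 0 (l x + q x - P - (l t + q t))) \<le> max 0 (l x + q x - P)"
    unfolding T_def l'_def .
qed

lemma load_map_upds: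
  assumes "finite J" and "set xs \<subseteq> J" and "distinct xs" and "distinct ys"
    and len: "length xs = length ys" and fresh: "\<And>x. x \<in> set xs \<Longrightarrow> \<sigma> x = None"
  shows "load J p (\<sigma>(xs [\<mapsto>] ys)) i
           = load J p \<sigma> i + (case map_of (zip ys xs) i of None \<Rightarrow> 0 | Some x \<Rightarrow> p x)"
proof -
  let ?\<sigma>' = "\<sigma>(xs [\<mapsto>] ys)"
  have new: "?\<sigma>' (xs ! k) = Some (ys ! k)" if "k < length xs" for k
    using map_upds_nth[OF \<open>distinct xs\<close> len that] .
  have old: "{j \<in> J. ?\<sigma>' j = Some i} - set xs = {j \<in> J. \<sigma> j = Some i}"
    using fresh by auto (metis map_upds_apply_nontin option.distinct(1))
  show ?thesis
  proof (cases "i \<in> set ys")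
    case True
    then obtain k where k: "k < length ys" "i = ys ! k" by (auto simp: in_set_conv_nth)
    have "{j \<in> J. ?\<sigma>' j = Some i} \<inter> set xs = {xs ! k}"
    proof (intro equalityI subsetI)
      fix j assume "j \<in> {j \<in> J. ?\<sigma>' j = Some i} \<inter> set xs"
      then obtain k' where "k' < length xs" "j = xs ! k'" "ys ! k' = ys ! k"
        using new k by (auto simp: in_set_conv_nth)
      then show "j \<in> {xs ! k}"
        using k \<open>distinct ys\<close> len by (simp add: nth_eq_iff_index_eq)
    qed (use k new len \<open>set xs \<subseteq> J\<close> in auto)
    then have "{j \<in> J. ?\<sigma>' j = Some i} = insert (xs ! k) {j \<in> J. \<sigma> j = Some i}"
      using old by blast
    moreover have "\<sigma> (xs ! k) = None" using fresh k len by simp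
    moreover have "map_of (zip ys xs) i = Some (xs ! k)"
      using map_of_zip_nth[of ys xs k] k len \<open>distinct ys\<close> by simp
    ultimately show ?thesis using \<open>finite J\<close> unfolding load_def by simp
  next
    case False
    have "{j \<in> J. ?\<sigma>' j = Some i} \<inter> set xs = {}"
      using new False len by (force simp: in_set_conv_nth)
    then have "{j \<in> J. ?\<sigma>' j = Some i} = {j \<in> J. \<sigma> j = Some i}"
      using old by blast
    moreover have "map_of (zip ys xs) i = None" using False len by simp
    ultimately show ?thesis unfolding load_def by simp
  qed
qed

lemma greedy_step_map_upds:
  assumes step: "greedy_step J p m pc B \<sigma> \<sigma>'"
    and parent: "\<And>u. pc = Some u \<Longrightarrow> u \<in> B"
    and fresh: "\<And>x. x \<in> B \<Longrightarrow> \<sigma> x \<noteq> None \<Longrightarrow> pc = Some x"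
  obtains xs ys e where "\<sigma>' = \<sigma>(xs [\<mapsto>] ys)" "set xs \<subseteq> B" "distinct xs" "distinct ys"
    "length xs = length ys" "sorted_wrt (\<lambda>a b. p b \<le> p a) xs"
    "sorted_wrt (\<lambda>a b. load J p \<sigma> a \<le> load J p \<sigma> b) ys"
    "\<And>x. x \<in> set xs \<Longrightarrow> \<sigma> x = None"
    "\<And>t x. t < m \<Longrightarrow> t \<notin> set ys \<Longrightarrow> t \<noteq> e \<Longrightarrow> x \<in> set ys \<Longrightarrow> load J p \<sigma> x \<le> load J p \<sigma> t"
proof -
  let ?ld = "load J p \<sigma>"
  obtain LJ LM where LJ: "distinct LJ" "set LJ = B" "sorted_wrt (\<lambda>a b. p b \<le> p a) LJ"
    and LM: "distinct LM" "length LM = card B" "sorted_wrt (\<lambda>a b. ?ld a \<le> ?ld b) LM"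
    and lightest: "\<And>a b. a \<in> set LM \<Longrightarrow> b < m \<Longrightarrow> b \<notin> set LM \<Longrightarrow> ?ld a \<le> ?ld b"
    and upd: "case pc of
         Some u \<Rightarrow> (case \<sigma> u of
             Some M' \<Rightarrow> \<sigma>' = \<sigma>(remove1 u LJ [\<mapsto>] (if M' \<in> set LM then remove1 M' LM else butlast LM))
           | None \<Rightarrow> \<sigma>' = \<sigma>(LJ [\<mapsto>] LM))
       | None \<Rightarrow> \<sigma>' = \<sigma>(LJ [\<mapsto>] LM)"
    using step unfolding greedy_step_def by blast
  have "length LJ = length LM" using LJ LM distinct_card by fastforce
  show ?thesis
  proof (cases "\<exists>u M'. pc = Some u \<and> \<sigma> u = Some M'")
    case False
    then have "\<sigma>' = \<sigma>(LJ [\<mapsto>] LM)" using upd by (auto split: option.splits)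
    moreover have "\<sigma> x = None" if "x \<in> set LJ" for x
      using fresh[of x] False that LJ(2) by fastforce
    ultimately show ?thesis
      using that[of LJ LM 0] LJ LM lightest \<open>length LJ = length LM\<close> by blast
  next
    case True
    then obtain u M' where u: "pc = Some u" "\<sigma> u = Some M'" by blast
    then have "u \<in> set LJ" using parent LJ(2) by blast
    then have "LM \<noteq> []" using \<open>length LJ = length LM\<close> by auto
    define xs where "xs = remove1 u LJ"
    define ys where "ys = (if M' \<in> set LM then remove1 M' LM else butlast LM)"
    have "\<sigma>' = \<sigma>(xs [\<mapsto>] ys)" using upd u unfolding xs_def ys_def by simp
    moreover have "set xs = B - {u}" using LJ unfolding xs_def by simp
    moreover have "length xs = length ys"
      using \<open>u \<in> set LJ\<close> \<open>length LJ = length LM\<close> unfolding xs_def ys_def by (simp add: length_remove1)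
    moreover have "sorted_wrt (\<lambda>a b. ?ld a \<le> ?ld b) ys"
      using LM unfolding ys_def by (simp add: sorted_wrt_remove1 sorted_wrt_butlast)
    moreover have "?ld x \<le> ?ld t"
      if "t < m" "t \<notin> set ys" "t \<noteq> M'" "x \<in> set ys" for t x
    proof (cases "t \<in> set LM")
      case False
      have "set ys \<subseteq> set LM"
        unfolding ys_def by (auto dest: in_set_butlastD set_remove1_subset[THEN subsetD])
      then show ?thesis using lightest that False by blast
    next
      case True
      then have "M' \<notin> set LM" "t = last LM"
        using that LM(1) last_notin_butlast_imp_eq[of t LM] unfolding ys_def by (auto split: if_splits)
      moreover have "sorted_wrt (\<lambda>a b. ?ld a \<le> ?ld b) (butlast LM @ [last LM])"
        using LM(3) \<open>LM \<noteq> []\<close> by simp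
      ultimately show ?thesis using that(4) unfolding ys_def sorted_wrt_append by simp
    qed
    moreover have "distinct ys" using LM(1) unfolding ys_def by (simp add: distinct_butlast)
    moreover have "\<sigma> x = None" if "x \<in> set xs" for x
      using fresh[of x] that \<open>set xs = B - {u}\<close> u by auto
    ultimately show ?thesis
      using that[of xs ys M'] LJ unfolding xs_def by (simp add: sorted_wrt_remove1)
  qed
qed

lemma greedy_step_excess_bounded:
  assumes "finite J" and "B \<subseteq> J" and step: "greedy_step J p m pc B \<sigma> \<sigma>'"
    and parent: "\<And>u. pc = Some u \<Longrightarrow> u \<in> B"
    and fresh: "\<And>x. x \<in> B \<Longrightarrow> \<sigma> x \<noteq> None \<Longrightarrow> pc = Some x"
    and bound: "excess_bounded m (real (Max (p ` J))) (\<lambda>i. real (load J p \<sigma> i))"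
  shows "excess_bounded m (real (Max (p ` J))) (\<lambda>i. real (load J p \<sigma>' i))"
proof -
  let ?P = "real (Max (p ` J))" and ?l = "\<lambda>i. real (load J p \<sigma> i)"
  obtain xs ys e where upd: "\<sigma>' = \<sigma>(xs [\<mapsto>] ys)" and xs: "set xs \<subseteq> B" "distinct xs"
    and ys: "distinct ys" and len: "length xs = length ys"
    and sorted_jobs: "sorted_wrt (\<lambda>a b. p b \<le> p a) xs"
    and sorted_machines: "sorted_wrt (\<lambda>a b. load J p \<sigma> a \<le> load J p \<sigma> b) ys"
    and new: "\<And>x. x \<in> set xs \<Longrightarrow> \<sigma> x = None"
    and lightest: "\<And>t x. t < m \<Longrightarrow> t \<notin> set ys \<Longrightarrow> t \<noteq> e \<Longrightarrow> x \<in> set ys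
                     \<Longrightarrow> load J p \<sigma> x \<le> load J p \<sigma> t"
    using greedy_step_map_upds[OF step parent fresh] by blast
  define q where "q i = real (case map_of (zip ys xs) i of None \<Rightarrow> 0 | Some x \<Rightarrow> p x)" for i
  have q_nth: "q (ys ! k) = real (p (xs ! k))" if "k < length ys" for k
    using map_of_zip_nth[of ys xs k] that len ys unfolding q_def by simp
  have "excess_bounded m ?P (\<lambda>i. ?l i + q i)"
  proof (rule excess_bounded_add[OF bound, where Y = "set ys" and e = e])
    show "0 \<le> q i \<and> q i \<le> ?P" for i
    proof (cases "map_of (zip ys xs) i")
      case (Some x)
      then have "x \<in> J" using xs \<open>B \<subseteq> J\<close> by (auto dest: map_of_SomeD set_zip_rightD)
      then show ?thesis using Some \<open>finite J\<close> unfolding q_def by simp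
    qed (simp add: q_def)
    show "q i = 0" if "i \<notin> set ys" for i
    proof -
      have "map_of (zip ys xs) i = None" using that len by simp
      then show ?thesis unfolding q_def by simp
    qed
    show "q x \<le> q t" if x: "x \<in> set ys" and t: "t \<in> set ys" and lt: "?l t < ?l x" for x t
    proof -
      obtain k k' where k: "k < length ys" "x = ys ! k" and k': "k' < length ys" "t = ys ! k'"
        using x t by (auto simp: in_set_conv_nth)
      have "\<not> k \<le> k'"
      proof
        assume "k \<le> k'"
        then have "load J p \<sigma> (ys ! k) \<le> load J p \<sigma> (ys ! k')"
        proof (cases "k = k'")
          case False
          with \<open>k \<le> k'\<close> have "k < k'" by simp
          from sorted_wrt_nth_less[OF sorted_machines this k'(1)] show ?thesis by simp
        qed simp
        then show False using lt k k' by simp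
      qed
      then have "k' < k" by simp
      with sorted_wrt_nth_less[OF sorted_jobs this] have "p (xs ! k) \<le> p (xs ! k')"
        using k len by simp
      then show ?thesis using q_nth k k' by simp
    qed
    show "0 \<le> ?l t" for t by simp
    show "?l x \<le> ?l t" if "t < m" "t \<notin> set ys" "t \<noteq> e" "x \<in> set ys" for t x
      using lightest[OF that] by simp
  qed
  moreover have "real (load J p \<sigma>' i) = ?l i + q i" for i
    unfolding upd q_def using load_map_upds[OF \<open>finite J\<close> _ xs(2) ys len new] xs \<open>B \<subseteq> J\<close>
    by (simp split: option.split)
  ultimately show ?thesis by simp
qed

lemma dom_greedy_step:
  assumes "greedy_step J p m pc B \<sigma> \<sigma>'"
    and "\<And>u. pc = Some u \<Longrightarrow> u \<in> B"
    and "\<And>x. x \<in> B \<Longrightarrow> \<sigma> x \<noteq> None \<Longrightarrow> pc = Some x"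
  shows "dom \<sigma>' \<subseteq> dom \<sigma> \<union> B"
  by (rule greedy_step_map_upds[OF assms]) (auto dest: in_set_takeD)

lemma is_block_block_order:
  assumes "is_preorder J E par ns" and "B \<in> set (block_order ns)"
  shows "is_block J E B"
proof -
  have "Inl B \<in> set ns" using assms(2) unfolding block_order_def by (auto simp: isl_def)
  then show ?thesis using assms(1) unfolding is_preorder_def bc_nodes_def by auto
qed

lemma distinct_block_order:
  assumes "is_preorder J E par ns"
  shows "distinct (block_order ns)"
proof -
  have "inj_on projl (set (filter isl ns))"
    by (rule inj_onI) (auto simp: isl_def)
  then show ?thesis using assms unfolding block_order_def is_preorder_def by (simp add: distinct_map)
qed

lemma is_preorder_sorted_not_ancestor:
  assumes "is_preorder J E par ns"
  shows "sorted_wrt (\<lambda>x y. \<not> (parent_rel par)\<^sup>*\<^sup>* x y) ns"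
  unfolding sorted_wrt_iff_nth_less
proof (intro allI impI notI)
  fix a b assume ab: "a < b" "b < length ns" and "(parent_rel par)\<^sup>*\<^sup>* (ns ! a) (ns ! b)"
  have "\<forall>i < length ns. \<exists>c. {l. l < length ns \<and> (parent_rel par)\<^sup>*\<^sup>* (ns ! l) (ns ! i)} = {i..<i + c}"
    using assms unfolding is_preorder_def by blast
  then obtain c where c: "{l. l < length ns \<and> (parent_rel par)\<^sup>*\<^sup>* (ns ! l) (ns ! b)} = {b..<b + c}"
    using ab(2) by blast
  have "a \<in> {l. l < length ns \<and> (parent_rel par)\<^sup>*\<^sup>* (ns ! l) (ns ! b)}"
    using ab \<open>(parent_rel par)\<^sup>*\<^sup>* (ns ! a) (ns ! b)\<close> by simp
  then show False using ab unfolding c by simp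
qed

lemma block_order_not_ancestor:
  assumes "is_preorder J E par ns" and "j' < j" and "j < length (block_order ns)"
  shows "\<not> (parent_rel par)\<^sup>*\<^sup>* (Inl (block_order ns ! j')) (Inl (block_order ns ! j))"
proof -
  have "sorted_wrt (\<lambda>x y. \<not> (parent_rel par)\<^sup>*\<^sup>* x y) (filter isl ns)"
    using is_preorder_sorted_not_ancestor[OF assms(1)] by (rule sorted_wrt_filter)
  then have "sorted_wrt (\<lambda>B B'. \<not> (parent_rel par)\<^sup>*\<^sup>* (Inl B) (Inl B')) (block_order ns)"
    unfolding block_order_def sorted_wrt_map
    by (rule sorted_wrt_mono_rel[rotated]) (auto simp: isl_def)
  then show ?thesis using assms(2,3) by (simp add: sorted_wrt_iff_nth_less)
qed

lemma parent_cut_mem: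
  assumes "is_rooting J E par" and "parent_cut par B = Some u"
  shows "u \<in> B"
proof -
  have "par (Inl B) = Some (Inr u)"
    using assms(2) unfolding parent_cut_def by (auto split: option.splits sum.splits)
  then have "bc_adj J E (Inl B) (Inr u)" using assms(1) unfolding is_rooting_def by blast
  then show ?thesis unfolding bc_adj_def by auto
qed

lemma shared_vertex_is_parent_cut:
  assumes root: "is_rooting J E par" and pre: "is_preorder J E par ns"
    and "j' < j" and "j < length (block_order ns)"
    and "v \<in> block_order ns ! j'" and "v \<in> block_order ns ! j"
  shows "parent_cut par (block_order ns ! j) = Some v"
proof -
  define B' B where "B' = block_order ns ! j'" and "B = block_order ns ! j"
  have blocks: "is_block J E B'" "is_block J E B"
    using is_block_block_order[OF pre] assms(3,4) unfolding B'_def B_def by auto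
  have "B' \<noteq> B" using distinct_block_order[OF pre] assms(3,4) unfolding B'_def B_def
    by (simp add: nth_eq_iff_index_eq)
  then have "cut_vertex J E v" unfolding cut_vertex_def using blocks assms(5,6) B'_def B_def by blast
  then have "bc_adj J E (Inl B') (Inr v)" "bc_adj J E (Inl B) (Inr v)"
    unfolding bc_adj_def using blocks assms(5,6) B'_def B_def by blast+
  then have edges: "par (Inl B') = Some (Inr v) \<or> par (Inr v) = Some (Inl B')"
    "par (Inl B) = Some (Inr v) \<or> par (Inr v) = Some (Inl B)"
    using root unfolding is_rooting_def by blast+
  \<comment> \<open>otherwise v would be a child of B and B' a child of v, making B an ancestor of the earlier B'\<close>
  have "\<not> (par (Inr v) = Some (Inl B) \<and> par (Inl B') = Some (Inr v))"
  proof
    assume "par (Inr v) = Some (Inl B) \<and> par (Inl B') = Some (Inr v)"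
    then have "(parent_rel par)\<^sup>*\<^sup>* (Inl B') (Inl B)"
      unfolding parent_rel_def by (meson rtranclp.rtrancl_into_rtrancl rtranclp.rtrancl_refl)
    then show False using block_order_not_ancestor[OF pre assms(3,4)] unfolding B'_def B_def by blast
  qed
  then have "par (Inl B) = Some (Inr v)" using edges \<open>B' \<noteq> B\<close> by auto
  then show ?thesis unfolding parent_cut_def B_def by simp
qed

theorem lemma1:
  fixes J :: "'j set" and E :: "'j \<Rightarrow> 'j \<Rightarrow> bool" and p :: "'j \<Rightarrow> nat" and m :: nat
    and par :: "('j set + 'j) \<Rightarrow> ('j set + 'j) option" and ns :: "('j set + 'j) list"
    and Bs :: "'j set list" and \<sigma>s :: "('j \<rightharpoonup> nat) list"
  assumes graph: "simple_graph J E"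
    and blk: "block_graph J E"
    and omega: "\<forall>K. K \<subseteq> J \<and> clique E K \<longrightarrow> card K \<le> m"
    and root: "is_rooting J E par"
    and pre: "is_preorder J E par ns"
    and Bs: "Bs = block_order ns"
    and len: "length \<sigma>s = length Bs + 1"
    and init: "\<sigma>s ! 0 = Map.empty"
    and run: "\<forall>j < length Bs. greedy_step J p m (parent_cut par (Bs ! j)) (Bs ! j) (\<sigma>s ! j) (\<sigma>s ! Suc j)"
  shows "\<forall>i < m. \<forall>j \<le> length Bs.
           real (load J p (\<sigma>s ! j) i)
             \<le> (\<Sum>i'<m. real (load J p (\<sigma>s ! j) i')) / real m
               + max ((\<Sum>i'<m. real (load J p (\<sigma>s ! j) i')) / real m) (real (Max (p ` J)))"
proof -
  let ?P = "real (Max (p ` J))"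
  have "finite J" using graph unfolding simple_graph_def by simp
  have invariant: "excess_bounded m ?P (\<lambda>i. real (load J p (\<sigma>s ! j) i)) \<and> dom (\<sigma>s ! j) \<subseteq> (\<Union>j'<j. Bs ! j')"
    if "j \<le> length Bs" for j
    using that
  proof (induction j)
    case 0
    then show ?case by (simp add: excess_bounded_def load_def init)
  next
    case (Suc j)
    then have j: "j < length Bs" and IH: "excess_bounded m ?P (\<lambda>i. real (load J p (\<sigma>s ! j) i))"
      "dom (\<sigma>s ! j) \<subseteq> (\<Union>j'<j. Bs ! j')" by auto
    have "Bs ! j \<subseteq> J" using is_block_block_order[OF pre] j Bs unfolding is_block_def by simp
    have parent: "u \<in> Bs ! j" if "parent_cut par (Bs ! j) = Some u" for u
      using parent_cut_mem[OF root that] .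
    have fresh: "parent_cut par (Bs ! j) = Some x" if "x \<in> Bs ! j" "(\<sigma>s ! j) x \<noteq> None" for x
      using IH(2) that shared_vertex_is_parent_cut[OF root pre, of _ j x] j Bs by blast
    have step: "greedy_step J p m (parent_cut par (Bs ! j)) (Bs ! j) (\<sigma>s ! j) (\<sigma>s ! Suc j)"
      using run j by blast
    show ?case
      using greedy_step_excess_bounded[OF \<open>finite J\<close> \<open>Bs ! j \<subseteq> J\<close> step parent fresh IH(1)]
        dom_greedy_step[OF step parent fresh] IH(2) by (auto simp: lessThan_Suc)
  qed
  show ?thesis
  proof (intro allI impI)
    fix i j assume "i < m" and "j \<le> length Bs"
    with invariant show "real (load J p (\<sigma>s ! j) i)
             \<le> (\<Sum>i'<m. real (load J p (\<sigma>s ! j) i')) / real m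
               + max ((\<Sum>i'<m. real (load J p (\<sigma>s ! j) i')) / real m) ?P"
      by (intro excess_bounded_imp_le_avg_plus_max) auto
  qed
qed

end
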